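(* Fix $k\ge1$ and real foci $(u_1,v_1),\ldots,(u_k,v_k)$, and regard $d$ as an indeterminate (alternatively, regard all of $d,u_i,v_i$ as indeterminates). The polynomial $$p_k(x,y)=\prod_{\sigma\in\{0,1\}^k}\Bigl(d-\sum_{i=1}^k(-1)^{\sigma_i}\sqrt{(x-u_i)^2+(y-v_i)^2}\Bigr)$$ has total degree in $(x,y)$ exactly $2^k$ if $k$ is odd and exactly $2^k-\binom{k}{k/2}$ if $k$ is even. Moreover $p_k(x,y)=\det(x\cdot A_k+y\cdot B_k+C_k)$ for symmetric $2^k\times2^k$ matrices $A_k,B_k,C_k$, where $A_k,B_k$ have integer entries and the entries of $C_k$ are linear forms in $d,u_1,v_1,\ldots,u_k,v_k$.
   Context: The $k$-ellipse with foci $(u_i,v_i)$ and radius $d$ is $\{(x,y)\in\mathbb{R}^2:\sum_{i=1}^k\sqrt{(x-u_i)^2+(y-v_i)^2}=d\}$, and $p_k$ (the product above) is its defining polynomial. *)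

theory Defs
  imports Complex_Main "HOL-Library.FuncSet" "Jordan_Normal_Form.Determinant"
begin

definition kellipse_poly :: "nat \<Rightarrow> (nat \<Rightarrow> real) \<Rightarrow> (nat \<Rightarrow> real) \<Rightarrow> real \<Rightarrow> real \<Rightarrow> real \<Rightarrow> real" where
  "kellipse_poly k u v d x y =
     (\<Prod>\<sigma>\<in>({..<k} \<rightarrow>\<^sub>E {0, 1::nat}).
        d - (\<Sum>i<k. (-1) ^ (\<sigma> i) * sqrt ((x - u i)^2 + (y - v i)^2)))"

definition poly_xyd_total_xy_degree :: "(real \<Rightarrow> real \<Rightarrow> real \<Rightarrow> real) \<Rightarrow> nat \<Rightarrow> bool" where
  "poly_xyd_total_xy_degree f D \<longleftrightarrow>
     (\<exists>(P :: nat \<Rightarrow> nat \<Rightarrow> nat \<Rightarrow> real) N.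
        (\<forall>a b c. P a b c \<noteq> 0 \<longrightarrow> a \<le> N \<and> b \<le> N \<and> c \<le> N) \<and>
        (\<forall>d x y. f d x y = (\<Sum>a\<le>N. \<Sum>b\<le>N. \<Sum>c\<le>N. P a b c * x ^ a * y ^ b * d ^ c)) \<and>
        (\<forall>a b c. P a b c \<noteq> 0 \<longrightarrow> a + b \<le> D) \<and>
        (\<exists>a b c. P a b c \<noteq> 0 \<and> a + b = D))"

end

theory Submission
  imports Defs "HOL-Real_Asymp.Real_Asymp"
begin

(* Write r_i for the distance from (x, y) to the i-th focus. The product over sign vectors satisfies
   p_{k+1}(d) = p_k(d - r_k) p_k(d + r_k), and this is exactly what the block determinant
   det [[L - a I, -b I], [-b I, L + a I]] = det ((L + d I)^2 - (a^2 + b^2) I) produces for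
   a = x - u_k, b = y - v_k, since r_k^2 = a^2 + b^2. Hence p_k = det (L_k + d I) for a recursively
   built symmetric matrix L_k whose entries are linear in the x - u_i, y - v_i; in particular p_k is a
   polynomial.
   Along a ray (t x, t y) every r_i equals t |(x, y)| + O(1), so the factor of a sign vector is O(1)
   when the vector is balanced (sum of signs zero) and O(t) otherwise. Thus p_k has degree at most
   D = 2^k - #balanced, and #balanced = binom(k, k/2) for even k, 0 for odd k. Along the x-axis
   r_i - t converges, and for large d the quotient p_k / t^D tends to a nonzero limit, so the
   degree is exactly D. *)

section \<open>The determinantal representation\<close>

definition prod_signed_sums :: "nat \<Rightarrow> (nat \<Rightarrow> real) \<Rightarrow> real \<Rightarrow> real" where
  "prod_signed_sums k r d = (\<Prod>\<sigma>\<in>{..<k} \<rightarrow>\<^sub>E {0, 1::nat}. d - (\<Sum>i<k. (-1) ^ \<sigma> i * r i))"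

lemma kellipse_poly_eq_prod_signed_sums:
  "kellipse_poly k u v d x y = prod_signed_sums k (\<lambda>i. sqrt ((x - u i)^2 + (y - v i)^2)) d"
  by (simp add: kellipse_poly_def prod_signed_sums_def)

lemma prod_signed_sums_Suc:
  "prod_signed_sums (Suc k) r d = prod_signed_sums k r (d - r k) * prod_signed_sums k r (d + r k)"
proof -
  let ?S = "{..<k} \<rightarrow>\<^sub>E {0, 1::nat}"
  have signed_sum_upd:
    "(\<Sum>i<Suc k. (-1) ^ (\<sigma>(k := s)) i * r i) = (\<Sum>i<k. (-1) ^ \<sigma> i * r i) + (-1) ^ s * r k"
    for \<sigma> :: "nat \<Rightarrow> nat" and s
  proof -
    have "(\<Sum>i<k. (-1) ^ (\<sigma>(k := s)) i * r i) = (\<Sum>i<k. (-1) ^ \<sigma> i * r i)"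
      by (intro sum.cong) auto
    then show ?thesis by simp
  qed
  have PiE_Suc: "{..<Suc k} \<rightarrow>\<^sub>E {0, 1::nat} = (\<lambda>(s, \<sigma>). \<sigma>(k := s)) ` ({0, 1} \<times> ?S)"
    by (simp add: lessThan_Suc PiE_insert_eq)
  have "prod_signed_sums (Suc k) r d
      = (\<Prod>(s, \<sigma>)\<in>{0, 1} \<times> ?S. d - (\<Sum>i<Suc k. (-1) ^ (\<sigma>(k := s)) i * r i))"
    unfolding prod_signed_sums_def PiE_Suc
    by (subst prod.reindex[OF inj_combinator]) (simp_all add: comp_def case_prod_unfold)
  also have "\<dots> = (\<Prod>s\<in>{0, 1::nat}. \<Prod>\<sigma>\<in>?S. d - (\<Sum>i<Suc k. (-1) ^ (\<sigma>(k := s)) i * r i))"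
    by (simp add: prod.cartesian_product)
  also have "\<dots> = (\<Prod>\<sigma>\<in>?S. (d - r k) - (\<Sum>i<k. (-1) ^ \<sigma> i * r i))
                 * (\<Prod>\<sigma>\<in>?S. (d + r k) - (\<Sum>i<k. (-1) ^ \<sigma> i * r i))"
    by (simp add: signed_sum_upd algebra_simps)
  finally show ?thesis
    unfolding prod_signed_sums_def .
qed

(* Entries of L_0 = 0 and L_{k+1} = [[L_k - a_k I, -b_k I], [-b_k I, L_k + a_k I]]. *)
fun kellipse_entry :: "nat \<Rightarrow> (nat \<Rightarrow> real) \<Rightarrow> (nat \<Rightarrow> real) \<Rightarrow> nat \<Rightarrow> nat \<Rightarrow> real" where
  "kellipse_entry 0 a b i j = 0"
| "kellipse_entry (Suc k) a b i j =
    (if i < 2^k then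
       (if j < 2^k then kellipse_entry k a b i j - (if i = j then a k else 0)
        else if j - 2^k = i then - b k else 0)
     else
       (if j < 2^k then (if i - 2^k = j then - b k else 0)
        else kellipse_entry k a b (i - 2^k) (j - 2^k) + (if i = j then a k else 0)))"

definition kellipse_mat :: "nat \<Rightarrow> (nat \<Rightarrow> real) \<Rightarrow> (nat \<Rightarrow> real) \<Rightarrow> real \<Rightarrow> real mat" where
  "kellipse_mat k a b d = mat (2^k) (2^k) (\<lambda>(i, j). kellipse_entry k a b i j + (if i = j then d else 0))"

lemma kellipse_entry_sym: "kellipse_entry k a b i j = kellipse_entry k a b j i"
  by (induction k arbitrary: i j) auto

lemma kellipse_entry_Ints: "(\<And>l. a l \<in> \<int>) \<Longrightarrow> (\<And>l. b l \<in> \<int>) \<Longrightarrow> kellipse_entry k a b i j \<in> \<int>"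
  by (induction k arbitrary: i j) auto

lemma kellipse_entry_cong:
  "(\<And>l. l < k \<Longrightarrow> a l = a' l) \<Longrightarrow> (\<And>l. l < k \<Longrightarrow> b l = b' l) \<Longrightarrow>
    kellipse_entry k a b i j = kellipse_entry k a' b' i j"
  by (induction k arbitrary: i j) auto

lemma kellipse_entry_add:
  "kellipse_entry k (\<lambda>l. a l + a' l) (\<lambda>l. b l + b' l) i j = kellipse_entry k a b i j + kellipse_entry k a' b' i j"
  by (induction k arbitrary: i j) auto

lemma kellipse_entry_scale:
  "kellipse_entry k (\<lambda>l. c * a l) (\<lambda>l. c * b l) i j = c * kellipse_entry k a b i j"
  by (induction k arbitrary: i j) (auto simp: algebra_simps)

lemma kellipse_entry_sum:
  "kellipse_entry k (\<lambda>l. \<Sum>m\<in>S. a m l) (\<lambda>l. \<Sum>m\<in>S. b m l) i j = (\<Sum>m\<in>S. kellipse_entry k (a m) (b m) i j)"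
  by (induction k arbitrary: i j) (auto simp: sum_subtractf sum.distrib sum_negf)

lemma kellipse_entry_linear:
  "kellipse_entry k a b i j =
     (\<Sum>l<k. a l * kellipse_entry k (\<lambda>m. of_bool (m = l)) (\<lambda>_. 0) i j + b l * kellipse_entry k (\<lambda>_. 0) (\<lambda>m. of_bool (m = l)) i j)"
proof -
  have delta: "(\<Sum>l<k. c l * of_bool (m = l)) = c m" if "m < k" for c :: "nat \<Rightarrow> real" and m
  proof -
    have "(\<Sum>l<k. c l * of_bool (m = l)) = (\<Sum>l<k. if m = l then c l else 0)"
      by (intro sum.cong) auto
    then show ?thesis
      using that by simp
  qed
  have "kellipse_entry k a b i j
      = kellipse_entry k (\<lambda>m. \<Sum>l<k. a l * of_bool (m = l) + 0) (\<lambda>m. \<Sum>l<k. 0 + b l * of_bool (m = l)) i j"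
    by (rule kellipse_entry_cong) (simp_all add: delta)
  also have "\<dots> = (\<Sum>l<k. kellipse_entry k (\<lambda>m. a l * of_bool (m = l) + 0) (\<lambda>m. 0 + b l * of_bool (m = l)) i j)"
    by (rule kellipse_entry_sum)
  also have "\<dots> = (\<Sum>l<k. a l * kellipse_entry k (\<lambda>m. of_bool (m = l)) (\<lambda>_. 0) i j + b l * kellipse_entry k (\<lambda>_. 0) (\<lambda>m. of_bool (m = l)) i j)"
  proof (intro sum.cong refl)
    fix l
    show "kellipse_entry k (\<lambda>m. a l * of_bool (m = l) + 0) (\<lambda>m. 0 + b l * of_bool (m = l)) i j
        = a l * kellipse_entry k (\<lambda>m. of_bool (m = l)) (\<lambda>_. 0) i j + b l * kellipse_entry k (\<lambda>_. 0) (\<lambda>m. of_bool (m = l)) i j"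
      using kellipse_entry_add[of k "\<lambda>m. a l * of_bool (m = l)" "\<lambda>_. 0" "\<lambda>_. 0" "\<lambda>m. b l * of_bool (m = l)" i j]
        kellipse_entry_scale[of k "a l" "\<lambda>m. of_bool (m = l)" "\<lambda>_. 0" i j]
        kellipse_entry_scale[of k "b l" "\<lambda>_. 0" "\<lambda>m. of_bool (m = l)" i j]
      by simp
  qed
  finally show ?thesis .
qed

lemma kellipse_mat_Suc:
  "kellipse_mat (Suc k) a b d =
     four_block_mat (kellipse_mat k a b (d - a k)) ((- b k) \<cdot>\<^sub>m 1\<^sub>m (2^k))
       ((- b k) \<cdot>\<^sub>m 1\<^sub>m (2^k)) (kellipse_mat k a b (d + a k))"
  unfolding kellipse_mat_def by (rule eq_matI) auto

lemma kellipse_mat_shift: "kellipse_mat k a b d = kellipse_mat k a b 0 + d \<cdot>\<^sub>m 1\<^sub>m (2^k)"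
  unfolding kellipse_mat_def by (rule eq_matI) auto

lemma index_mult_shifted_mat:
  fixes X :: "'a :: comm_ring_1 mat"
  assumes X: "X \<in> carrier_mat n n" and "i < n" "j < n"
  shows "((X + p \<cdot>\<^sub>m 1\<^sub>m n) * (X + q \<cdot>\<^sub>m 1\<^sub>m n)) $$ (i, j)
       = (X * X) $$ (i, j) + (p + q) * X $$ (i, j) + (if i = j then p * q else 0)"
proof -
  have "((X + p \<cdot>\<^sub>m 1\<^sub>m n) * (X + q \<cdot>\<^sub>m 1\<^sub>m n)) $$ (i, j)
      = (\<Sum>l\<in>{0..<n}. (X $$ (i, l) + (if i = l then p else 0)) * (X $$ (l, j) + (if l = j then q else 0)))"
    using assms by (simp add: scalar_prod_def) (intro sum.cong refl, auto)
  also have "\<dots> = (\<Sum>l\<in>{0..<n}. X $$ (i, l) * X $$ (l, j) + (if l = j then q * X $$ (i, l) else 0)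
                  + (if l = i then p * X $$ (l, j) else 0) + (if l = i then (if i = j then p * q else 0) else 0))"
    by (rule sum.cong) (auto simp: algebra_simps)
  also have "\<dots> = (X * X) $$ (i, j) + (p + q) * X $$ (i, j) + (if i = j then p * q else 0)"
    using assms by (simp add: sum.distrib scalar_prod_def distrib_right)
  finally show ?thesis .
qed

lemma mult_shifted_mat_eq:
  fixes X :: "'a :: comm_ring_1 mat"
  assumes X: "X \<in> carrier_mat n n" and "p + q = s + t" and "p * q - c * c = s * t"
  shows "(X + p \<cdot>\<^sub>m 1\<^sub>m n) * (X + q \<cdot>\<^sub>m 1\<^sub>m n) - (c \<cdot>\<^sub>m 1\<^sub>m n) * (c \<cdot>\<^sub>m 1\<^sub>m n)
       = (X + s \<cdot>\<^sub>m 1\<^sub>m n) * (X + t \<cdot>\<^sub>m 1\<^sub>m n)"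
proof (rule eq_matI)
  fix i j assume "i < dim_row ((X + s \<cdot>\<^sub>m 1\<^sub>m n) * (X + t \<cdot>\<^sub>m 1\<^sub>m n))"
    and "j < dim_col ((X + s \<cdot>\<^sub>m 1\<^sub>m n) * (X + t \<cdot>\<^sub>m 1\<^sub>m n))"
  then have ij: "i < n" "j < n" using X by auto
  have cc: "((c \<cdot>\<^sub>m 1\<^sub>m n) * (c \<cdot>\<^sub>m 1\<^sub>m n)) $$ (i, j) = (if i = j then c * c else 0)"
    using index_mult_shifted_mat[of "0\<^sub>m n n" n i j c c] ij by simp
  have "((X + p \<cdot>\<^sub>m 1\<^sub>m n) * (X + q \<cdot>\<^sub>m 1\<^sub>m n) - (c \<cdot>\<^sub>m 1\<^sub>m n) * (c \<cdot>\<^sub>m 1\<^sub>m n)) $$ (i, j)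
      = ((X + p \<cdot>\<^sub>m 1\<^sub>m n) * (X + q \<cdot>\<^sub>m 1\<^sub>m n)) $$ (i, j) - ((c \<cdot>\<^sub>m 1\<^sub>m n) * (c \<cdot>\<^sub>m 1\<^sub>m n)) $$ (i, j)"
    using ij by (intro index_minus_mat) auto
  also have "\<dots> = (X * X) $$ (i, j) + (p + q) * X $$ (i, j) + (if i = j then p * q - c * c else 0)"
    unfolding index_mult_shifted_mat[OF X ij] cc by simp
  also have "\<dots> = ((X + s \<cdot>\<^sub>m 1\<^sub>m n) * (X + t \<cdot>\<^sub>m 1\<^sub>m n)) $$ (i, j)"
    unfolding index_mult_shifted_mat[OF X ij] using assms(2,3) by simp
  finally show "((X + p \<cdot>\<^sub>m 1\<^sub>m n) * (X + q \<cdot>\<^sub>m 1\<^sub>m n) - (c \<cdot>\<^sub>m 1\<^sub>m n) * (c \<cdot>\<^sub>m 1\<^sub>m n)) $$ (i, j)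
      = ((X + s \<cdot>\<^sub>m 1\<^sub>m n) * (X + t \<cdot>\<^sub>m 1\<^sub>m n)) $$ (i, j)" .
qed (use X in auto)

lemma det_kellipse_mat: "det (kellipse_mat k a b d) = prod_signed_sums k (\<lambda>i. sqrt ((a i)^2 + (b i)^2)) d"
proof (induction k arbitrary: d)
  case 0
  then show ?case
    by (simp add: det_single kellipse_mat_def prod_signed_sums_def)
next
  case (Suc k)
  let ?n = "2^k :: nat" and ?r = "sqrt ((a k)^2 + (b k)^2)"
  let ?X = "kellipse_mat k a b 0" and ?B = "(- b k) \<cdot>\<^sub>m 1\<^sub>m ?n"
  have M: "kellipse_mat k a b c \<in> carrier_mat ?n ?n" for c
    by (simp add: kellipse_mat_def)
  have comm: "?B * kellipse_mat k a b (d + a k) = kellipse_mat k a b (d + a k) * ?B"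
    using mult_smult_assoc_mat[OF one_carrier_mat M] mult_smult_distrib[OF M one_carrier_mat]
    by (simp add: left_mult_one_mat[OF M] right_mult_one_mat[OF M])
  have "det (kellipse_mat (Suc k) a b d) = det (kellipse_mat k a b (d - a k) * kellipse_mat k a b (d + a k) - ?B * ?B)"
    unfolding kellipse_mat_Suc by (rule det_four_block_mat[OF M _ _ M comm]) auto
  also have "kellipse_mat k a b (d - a k) * kellipse_mat k a b (d + a k) - ?B * ?B
      = (?X + (d - ?r) \<cdot>\<^sub>m 1\<^sub>m ?n) * (?X + (d + ?r) \<cdot>\<^sub>m 1\<^sub>m ?n)"
    unfolding kellipse_mat_shift[of k a b "d - a k"] kellipse_mat_shift[of k a b "d + a k"]
    by (rule mult_shifted_mat_eq[OF M]) (simp_all add: algebra_simps power2_eq_square flip: real_sqrt_mult)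
  also have "det \<dots> = det (kellipse_mat k a b (d - ?r)) * det (kellipse_mat k a b (d + ?r))"
    by (simp add: det_mult[OF M M] flip: kellipse_mat_shift)
  finally show ?case
    by (simp add: Suc.IH prod_signed_sums_Suc)
qed

lemma kellipse_poly_det_pencil:
  "\<exists>(A :: nat \<Rightarrow> nat \<Rightarrow> real) (B :: nat \<Rightarrow> nat \<Rightarrow> real)
      (C0 :: nat \<Rightarrow> nat \<Rightarrow> real) (U :: nat \<Rightarrow> nat \<Rightarrow> nat \<Rightarrow> real) (V :: nat \<Rightarrow> nat \<Rightarrow> nat \<Rightarrow> real).
      (\<forall>i < 2 ^ k. \<forall>j < 2 ^ k.
         A i j = A j i \<and> B i j = B j i \<and> C0 i j = C0 j i \<and>
         (\<forall>l < k. U l i j = U l j i \<and> V l i j = V l j i) \<and>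
         A i j \<in> \<int> \<and> B i j \<in> \<int>) \<and>
      (\<forall>(u' :: nat \<Rightarrow> real) (v' :: nat \<Rightarrow> real) d x y.
         kellipse_poly k u' v' d x y =
         det (mat (2 ^ k) (2 ^ k) (\<lambda>(i, j).
            x * A i j + y * B i j +
            (d * C0 i j + (\<Sum>l<k. u' l * U l i j + v' l * V l i j)))))"
proof -
  define \<alpha> where "\<alpha> l = kellipse_entry k (\<lambda>m. of_bool (m = l)) (\<lambda>_. 0)" for l
  define \<beta> where "\<beta> l = kellipse_entry k (\<lambda>_. 0) (\<lambda>m. of_bool (m = l))" for l
  define A where "A i j = (\<Sum>l<k. \<alpha> l i j)" for i j
  define B where "B i j = (\<Sum>l<k. \<beta> l i j)" for i j
  define C0 where "C0 i j = (if i = j then 1 else 0 :: real)" for i j :: nat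
  define U where "U l i j = - \<alpha> l i j" for l i j
  define V where "V l i j = - \<beta> l i j" for l i j
  have "A i j = A j i \<and> B i j = B j i \<and> C0 i j = C0 j i \<and>
        (\<forall>l < k. U l i j = U l j i \<and> V l i j = V l j i) \<and> A i j \<in> \<int> \<and> B i j \<in> \<int>" for i j
    unfolding A_def B_def C0_def U_def V_def \<alpha>_def \<beta>_def
    by (auto simp: kellipse_entry_sym[of k _ _ i j] intro!: Ints_sum kellipse_entry_Ints)
  moreover have "kellipse_poly k u' v' d x y =
         det (mat (2 ^ k) (2 ^ k) (\<lambda>(i, j). x * A i j + y * B i j +
            (d * C0 i j + (\<Sum>l<k. u' l * U l i j + v' l * V l i j))))" for u' v' d x y
  proof -
    have "kellipse_entry k (\<lambda>l. x - u' l) (\<lambda>l. y - v' l) i j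
        = (\<Sum>l<k. x * \<alpha> l i j + y * \<beta> l i j - (u' l * \<alpha> l i j + v' l * \<beta> l i j))" for i j
      unfolding kellipse_entry_linear[of k "\<lambda>l. x - u' l"] \<alpha>_def \<beta>_def
      by (intro sum.cong) (simp_all add: algebra_simps)
    also have "\<dots> i j = x * A i j + y * B i j + (\<Sum>l<k. u' l * U l i j + v' l * V l i j)" for i j
      unfolding A_def B_def U_def V_def by (simp add: sum.distrib sum_subtractf sum_distrib_left sum_negf)
    finally have "mat (2 ^ k) (2 ^ k) (\<lambda>(i, j). x * A i j + y * B i j + (d * C0 i j + (\<Sum>l<k. u' l * U l i j + v' l * V l i j)))
        = kellipse_mat k (\<lambda>l. x - u' l) (\<lambda>l. y - v' l) d"
      unfolding kellipse_mat_def C0_def by (intro eq_matI) auto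
    then show ?thesis
      by (simp add: det_kellipse_mat kellipse_poly_eq_prod_signed_sums)
  qed
  ultimately show ?thesis
    by blast
qed

section \<open>Polynomial functions of three variables\<close>

inductive polyfun3 :: "(real \<Rightarrow> real \<Rightarrow> real \<Rightarrow> real) \<Rightarrow> bool" where
  polyfun3_monom: "polyfun3 (\<lambda>d x y. c * x ^ a * y ^ b * d ^ e)"
| polyfun3_add: "polyfun3 f \<Longrightarrow> polyfun3 g \<Longrightarrow> polyfun3 (\<lambda>d x y. f d x y + g d x y)"

lemma polyfun3_const: "polyfun3 (\<lambda>d x y. c)"
  using polyfun3_monom[of c 0 0 0] by simp

lemma polyfun3_affine: "polyfun3 (\<lambda>d x y. x * \<alpha> + y * \<beta> + (d * \<gamma> + \<delta>))"
proof -
  have "polyfun3 (\<lambda>d x y. \<alpha> * x ^ 1 * y ^ 0 * d ^ 0 + \<beta> * x ^ 0 * y ^ 1 * d ^ 0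
                      + (\<gamma> * x ^ 0 * y ^ 0 * d ^ 1 + \<delta> * x ^ 0 * y ^ 0 * d ^ 0))"
    by (intro polyfun3_add polyfun3_monom)
  then show ?thesis
    by (simp add: ac_simps)
qed

lemma polyfun3_monom_mult: "polyfun3 g \<Longrightarrow> polyfun3 (\<lambda>d x y. (c * x ^ a * y ^ b * d ^ e) * g d x y)"
proof (induction g rule: polyfun3.induct)
  case (polyfun3_monom c' a' b' e')
  have "(\<lambda>d x y. (c * x ^ a * y ^ b * d ^ e) * (c' * x ^ a' * y ^ b' * d ^ e'))
      = (\<lambda>d x y. (c * c') * x ^ (a + a') * y ^ (b + b') * d ^ (e + e'))"
    by (simp add: fun_eq_iff power_add algebra_simps)
  then show ?case
    by (simp only: polyfun3.polyfun3_monom)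
next
  case (polyfun3_add f g)
  then show ?case
    using polyfun3.polyfun3_add[OF polyfun3_add.IH] by (simp add: distrib_left)
qed

lemma polyfun3_mult: "polyfun3 f \<Longrightarrow> polyfun3 g \<Longrightarrow> polyfun3 (\<lambda>d x y. f d x y * g d x y)"
proof (induction f rule: polyfun3.induct)
  case (polyfun3_monom c a b e)
  then show ?case
    by (rule polyfun3_monom_mult)
next
  case (polyfun3_add f1 f2)
  then show ?case
    using polyfun3.polyfun3_add[OF polyfun3_add.IH] by (simp add: distrib_right)
qed

lemma polyfun3_sum:
  "finite S \<Longrightarrow> (\<And>s. s \<in> S \<Longrightarrow> polyfun3 (f s)) \<Longrightarrow> polyfun3 (\<lambda>d x y. \<Sum>s\<in>S. f s d x y)"
  by (induction S rule: finite_induct) (auto intro: polyfun3_const polyfun3_add)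

lemma polyfun3_prod:
  "finite S \<Longrightarrow> (\<And>s. s \<in> S \<Longrightarrow> polyfun3 (f s)) \<Longrightarrow> polyfun3 (\<lambda>d x y. \<Prod>s\<in>S. f s d x y)"
  by (induction S rule: finite_induct) (auto intro: polyfun3_const polyfun3_mult)

lemma polyfun3_det:
  assumes "\<And>i j. polyfun3 (E i j)"
  shows "polyfun3 (\<lambda>d x y. det (mat n n (\<lambda>(i, j). E i j d x y)))"
proof -
  have "det (mat n n (\<lambda>(i, j). E i j d x y))
      = (\<Sum>p\<in>{p. p permutes {0..<n}}. signof p * (\<Prod>i\<in>{0..<n}. E i (p i) d x y))" for d x y
    by (subst det_def'[of _ n]) (auto intro!: sum.cong prod.cong simp: permutes_in_image)
  then show ?thesis
    by (simp add: polyfun3_sum polyfun3_mult polyfun3_const polyfun3_prod assms finite_permutations)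
qed

lemma polyfun3_kellipse_poly: "polyfun3 (kellipse_poly k u v)"
proof -
  obtain A B C0 U V where "\<forall>u' v' d x y. kellipse_poly k u' v' d x y =
      det (mat (2 ^ k) (2 ^ k) (\<lambda>(i, j). x * A i j + y * B i j +
                 (d * C0 i j + (\<Sum>l<k. u' l * U l i j + v' l * V l i j))))"
    using kellipse_poly_det_pencil[of k] by blast
  then have "kellipse_poly k u v = (\<lambda>d x y. det (mat (2 ^ k) (2 ^ k) (\<lambda>(i, j). x * A i j + y * B i j +
                 (d * C0 i j + (\<Sum>l<k. u l * U l i j + v l * V l i j)))))"
    by blast
  then show ?thesis
    by (simp add: polyfun3_det polyfun3_affine)
qed

definition poly3_eval :: "(nat \<Rightarrow> nat \<Rightarrow> nat \<Rightarrow> real) \<Rightarrow> nat \<Rightarrow> real \<Rightarrow> real \<Rightarrow> real \<Rightarrow> real" where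
  "poly3_eval P N d x y = (\<Sum>a\<le>N. \<Sum>b\<le>N. \<Sum>c\<le>N. P a b c * x ^ a * y ^ b * d ^ c)"

lemma poly3_eval_enlarge:
  assumes supp: "\<forall>a b c. P a b c \<noteq> 0 \<longrightarrow> a \<le> M \<and> b \<le> M \<and> c \<le> M" and "M \<le> N"
  shows "poly3_eval P N d x y = poly3_eval P M d x y"
proof -
  have trunc: "(\<Sum>i\<le>N. g i) = (\<Sum>i\<le>M. g i)" if "\<And>i. M < i \<Longrightarrow> g i = 0" for g :: "nat \<Rightarrow> real"
    using \<open>M \<le> N\<close> that by (intro sum.mono_neutral_right) auto
  have zero: "P a b c = 0" if "M < a \<or> M < b \<or> M < c" for a b c
    using supp that by force
  have "(\<Sum>c\<le>N. P a b c * x ^ a * y ^ b * d ^ c) = (\<Sum>c\<le>M. P a b c * x ^ a * y ^ b * d ^ c)" for a b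
    by (rule trunc) (simp add: zero)
  moreover have "(\<Sum>b\<le>N. \<Sum>c\<le>M. P a b c * x ^ a * y ^ b * d ^ c)
      = (\<Sum>b\<le>M. \<Sum>c\<le>M. P a b c * x ^ a * y ^ b * d ^ c)" for a
    by (rule trunc) (simp add: zero)
  moreover have "(\<Sum>a\<le>N. \<Sum>b\<le>M. \<Sum>c\<le>M. P a b c * x ^ a * y ^ b * d ^ c)
      = (\<Sum>a\<le>M. \<Sum>b\<le>M. \<Sum>c\<le>M. P a b c * x ^ a * y ^ b * d ^ c)"
    by (rule trunc) (simp add: zero)
  ultimately show ?thesis
    unfolding poly3_eval_def by simp
qed

lemma polyfun3_coeffs:
  "polyfun3 f \<Longrightarrow> \<exists>P N. (\<forall>a b c. P a b c \<noteq> 0 \<longrightarrow> a \<le> N \<and> b \<le> N \<and> c \<le> N) \<and>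
                         (\<forall>d x y. f d x y = poly3_eval P N d x y)"
proof (induction f rule: polyfun3.induct)
  case (polyfun3_monom c a b e)
  let ?N = "max a (max b e)"
  let ?P = "\<lambda>a' b' e'. if e' = e then if b' = b then if a' = a then c else 0 else 0 else 0"
  have "poly3_eval ?P ?N d x y = c * x ^ a * y ^ b * d ^ e" for d x y
    unfolding poly3_eval_def by (simp add: if_distrib[of "\<lambda>z. z * _"] le_max_iff_disj cong: if_cong)
  then show ?case
    by (intro exI[of _ ?P] exI[of _ ?N]) auto
next
  case (polyfun3_add f g)
  from polyfun3_add.IH obtain P1 N1 P2 N2
    where P1: "\<forall>a b c. P1 a b c \<noteq> 0 \<longrightarrow> a \<le> N1 \<and> b \<le> N1 \<and> c \<le> N1"
      and f: "\<forall>d x y. f d x y = poly3_eval P1 N1 d x y"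
      and P2: "\<forall>a b c. P2 a b c \<noteq> 0 \<longrightarrow> a \<le> N2 \<and> b \<le> N2 \<and> c \<le> N2"
      and g: "\<forall>d x y. g d x y = poly3_eval P2 N2 d x y"
    by blast
  let ?N = "max N1 N2" and ?P = "\<lambda>a b c. P1 a b c + P2 a b c"
  have "poly3_eval ?P ?N d x y = poly3_eval P1 ?N d x y + poly3_eval P2 ?N d x y" for d x y
    unfolding poly3_eval_def by (simp add: sum.distrib distrib_right)
  also have "\<dots> d x y = f d x y + g d x y" for d x y
    using poly3_eval_enlarge[OF P1, of ?N] poly3_eval_enlarge[OF P2, of ?N] f g by simp
  finally have eval: "\<forall>d x y. f d x y + g d x y = poly3_eval ?P ?N d x y"
    by simp
  have supp: "\<forall>a b c. ?P a b c \<noteq> 0 \<longrightarrow> a \<le> ?N \<and> b \<le> ?N \<and> c \<le> ?N"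
  proof (intro allI impI)
    fix a b c
    assume "?P a b c \<noteq> 0"
    then have "P1 a b c \<noteq> 0 \<or> P2 a b c \<noteq> 0"
      by auto
    then show "a \<le> ?N \<and> b \<le> ?N \<and> c \<le> ?N"
      using P1 P2 by (auto simp: le_max_iff_disj)
  qed
  show ?case
    by (intro exI[of _ ?P] exI[of _ ?N] conjI supp eval)
qed

section \<open>Reading off the degree from the growth along rays\<close>

lemma tendsto_const_div_power_at_top: "0 < n \<Longrightarrow> ((\<lambda>t::real. c / t ^ n) \<longlongrightarrow> 0) at_top"
  by (rule tendsto_divide_0[OF tendsto_const])
     (rule filterlim_at_top_imp_at_infinity[OF filterlim_pow_at_top[OF _ filterlim_ident]])

lemma tendsto_sum_powers_div_power:
  fixes c :: "nat \<Rightarrow> real"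
  assumes "\<And>j. D < j \<Longrightarrow> j \<le> M \<Longrightarrow> c j = 0"
  shows "((\<lambda>t. (\<Sum>j\<le>M. c j * t ^ j) / t ^ D) \<longlongrightarrow> (if D \<le> M then c D else 0)) at_top"
proof -
  let ?h = "\<lambda>j t. if j < D then c j / t ^ (D - j) else if j = D then c j else 0"
  have "\<forall>\<^sub>F t in at_top. (\<Sum>j\<le>M. ?h j t) = (\<Sum>j\<le>M. c j * t ^ j) / t ^ D"
    using eventually_gt_at_top[of 0]
  proof eventually_elim
    case (elim t)
    have "c j * t ^ j / t ^ D = ?h j t" if "j \<le> M" for j
    proof (cases "j < D")
      case True
      then have "t ^ D = t ^ j * t ^ (D - j)"
        by (simp flip: power_add)
      then show ?thesis
        using True elim by simp
    qed (use assms that elim in auto)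
    then show ?case
      by (simp add: sum_divide_distrib)
  qed
  moreover have "((\<lambda>t. \<Sum>j\<le>M. ?h j t) \<longlongrightarrow> (\<Sum>j\<le>M. if j = D then c j else 0)) at_top"
  proof (intro tendsto_sum)
    fix j
    have "((\<lambda>t::real. c j / t ^ (D - j)) \<longlongrightarrow> 0) at_top" if "j < D"
      using that by (intro tendsto_const_div_power_at_top) simp
    then show "((\<lambda>t. ?h j t) \<longlongrightarrow> (if j = D then c j else 0)) at_top"
      by (cases "j < D") auto
  qed
  ultimately show ?thesis
    by (simp add: tendsto_cong)
qed

lemma sum_powers_bounded_coeffs_eq_0:
  fixes c :: "nat \<Rightarrow> real"
  assumes bound: "\<forall>t\<ge>1. \<bar>\<Sum>j\<le>M. c j * t ^ j\<bar> \<le> C * t ^ D" and "D < j" "j \<le> M"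
  shows "c j = 0"
proof (rule ccontr)
  assume "c j \<noteq> 0"
  let ?S = "{j. D < j \<and> j \<le> M \<and> c j \<noteq> 0}"
  define m where "m = Max ?S"
  have "?S \<noteq> {}"
    using \<open>c j \<noteq> 0\<close> assms by auto
  moreover have fin: "finite ?S"
    by (rule finite_subset[of _ "{..M}"]) auto
  ultimately have "m \<in> ?S"
    unfolding m_def by (rule Max_in[rotated])
  then have m: "D < m" "m \<le> M" "c m \<noteq> 0"
    by auto
  have top: "c j = 0" if "m < j" "j \<le> M" for j
  proof (rule ccontr)
    assume "c j \<noteq> 0"
    then have "j \<le> m"
      unfolding m_def using fin that m by (intro Max_ge) auto
    then show False
      using that by simp
  qed
  have "((\<lambda>t. (\<Sum>j\<le>M. c j * t ^ j) / t ^ m) \<longlongrightarrow> c m) at_top"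
    using tendsto_sum_powers_div_power[of m M c] top m by simp
  moreover have "((\<lambda>t. (\<Sum>j\<le>M. c j * t ^ j) / t ^ m) \<longlongrightarrow> 0) at_top"
  proof (rule tendsto_0_le)
    show "((\<lambda>t::real. 1 / t ^ (m - D)) \<longlongrightarrow> 0) at_top"
      using m by (intro tendsto_const_div_power_at_top) simp
    show "\<forall>\<^sub>F t in at_top. norm ((\<Sum>j\<le>M. c j * t ^ j) / t ^ m) \<le> norm (1 / t ^ (m - D)) * C"
      using eventually_ge_at_top[of 1]
    proof eventually_elim
      case (elim t)
      have "t ^ m = t ^ D * t ^ (m - D)"
        using m by (simp flip: power_add)
      then have "C * t ^ D / t ^ m = C / t ^ (m - D)"
        using elim by simp
      moreover have "\<bar>\<Sum>j\<le>M. c j * t ^ j\<bar> / t ^ m \<le> C * t ^ D / t ^ m"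
        using bound elim by (intro divide_right_mono) auto
      ultimately show ?case
        using elim by (simp add: abs_divide)
    qed
  qed
  ultimately have "c m = 0"
    by (rule tendsto_unique[OF trivial_limit_at_top_linorder])
  then show False
    using m by simp
qed

definition poly3_hom :: "(nat \<Rightarrow> nat \<Rightarrow> nat \<Rightarrow> real) \<Rightarrow> nat \<Rightarrow> nat \<Rightarrow> real \<Rightarrow> real \<Rightarrow> real \<Rightarrow> real" where
  "poly3_hom P N j d x y = (\<Sum>a\<le>N. \<Sum>b\<le>N. \<Sum>c\<le>N. if a + b = j then P a b c * x ^ a * y ^ b * d ^ c else 0)"

lemma poly3_eval_scaled:
  "poly3_eval (\<lambda>a b c. if Q (a + b) then P a b c else 0) N d (t * x) (t * y)
     = (\<Sum>j\<le>2 * N. if Q j then poly3_hom P N j d x y * t ^ j else 0)"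
proof -
  let ?T = "\<lambda>j a b c. if a + b = j \<and> Q j then P a b c * x ^ a * y ^ b * d ^ c * t ^ j else 0"
  have "(\<Sum>j\<le>2 * N. if Q j then poly3_hom P N j d x y * t ^ j else 0)
      = (\<Sum>j\<le>2 * N. \<Sum>a\<le>N. \<Sum>b\<le>N. \<Sum>c\<le>N. ?T j a b c)"
    unfolding poly3_hom_def
    by (intro sum.cong refl) (auto simp: sum_distrib_right if_distrib[of "\<lambda>z. z * _"] cong: if_cong)
  also have "\<dots> = (\<Sum>a\<le>N. \<Sum>j\<le>2 * N. \<Sum>b\<le>N. \<Sum>c\<le>N. ?T j a b c)"
    by (rule sum.swap)
  also have "\<dots> = (\<Sum>a\<le>N. \<Sum>b\<le>N. \<Sum>j\<le>2 * N. \<Sum>c\<le>N. ?T j a b c)"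
    by (rule sum.cong[OF refl], rule sum.swap)
  also have "\<dots> = (\<Sum>a\<le>N. \<Sum>b\<le>N. \<Sum>c\<le>N. \<Sum>j\<le>2 * N. ?T j a b c)"
    by (rule sum.cong[OF refl], rule sum.cong[OF refl], rule sum.swap)
  also have "\<dots> = poly3_eval (\<lambda>a b c. if Q (a + b) then P a b c else 0) N d (t * x) (t * y)"
    unfolding poly3_eval_def
  proof (intro sum.cong refl)
    fix a b c assume "a \<in> {..N}" "b \<in> {..N}"
    have "(\<Sum>j\<le>2 * N. ?T j a b c)
        = (\<Sum>j\<le>2 * N. if j = a + b then (if Q (a + b) then P a b c * x ^ a * y ^ b * d ^ c * t ^ (a + b) else 0) else 0)"
      by (intro sum.cong) auto
    also have "\<dots> = (if Q (a + b) then P a b c * x ^ a * y ^ b * d ^ c * t ^ (a + b) else 0)"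
      using \<open>a \<in> {..N}\<close> \<open>b \<in> {..N}\<close> by simp
    finally show "(\<Sum>j\<le>2 * N. ?T j a b c) = (if Q (a + b) then P a b c else 0) * (t * x) ^ a * (t * y) ^ b * d ^ c"
      by (simp add: power_mult_distrib power_add)
  qed
  finally show ?thesis ..
qed

lemma poly_xyd_total_xy_degreeI:
  assumes supp: "\<forall>a b c. P a b c \<noteq> 0 \<longrightarrow> a \<le> N \<and> b \<le> N \<and> c \<le> N"
    and eval: "\<forall>d x y. f d x y = poly3_eval P N d x y"
    and growth: "\<And>d x y. \<exists>C. \<forall>t\<ge>1. \<bar>f d (t * x) (t * y)\<bar> \<le> C * t ^ D"
    and limit: "((\<lambda>t. f d0 (t * x0) (t * y0) / t ^ D) \<longlongrightarrow> L) at_top" and "L \<noteq> 0"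
  shows "poly_xyd_total_xy_degree f D"
proof -
  have scaled: "f d (t * x) (t * y) = (\<Sum>j\<le>2 * N. poly3_hom P N j d x y * t ^ j)" for d x y t
    using eval poly3_eval_scaled[of "\<lambda>_. True" P N d t x y] by simp
  have high: "poly3_hom P N j d x y = 0" if "D < j" "j \<le> 2 * N" for j d x y
  proof -
    obtain C where "\<forall>t\<ge>1. \<bar>f d (t * x) (t * y)\<bar> \<le> C * t ^ D"
      using growth by blast
    then have "\<forall>t\<ge>1. \<bar>\<Sum>j\<le>2 * N. poly3_hom P N j d x y * t ^ j\<bar> \<le> C * t ^ D"
      by (simp only: scaled)
    then show ?thesis
      using that by (rule sum_powers_bounded_coeffs_eq_0)
  qed
  define P' where "P' a b c = (if a + b \<le> D then P a b c else 0)" for a b c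
  have eval': "f d x y = poly3_eval P' N d x y" for d x y
  proof -
    have "f d x y = (\<Sum>j\<le>2 * N. poly3_hom P N j d x y * 1 ^ j)"
      using scaled[of d 1 x y] by simp
    also have "\<dots> = (\<Sum>j\<le>2 * N. if j \<le> D then poly3_hom P N j d x y * 1 ^ j else 0)"
      by (intro sum.cong refl) (auto simp: high)
    also have "\<dots> = poly3_eval P' N d (1 * x) (1 * y)"
      unfolding P'_def by (rule poly3_eval_scaled[where Q = "\<lambda>j. j \<le> D", symmetric])
    finally show ?thesis
      by simp
  qed
  have "((\<lambda>t. f d0 (t * x0) (t * y0) / t ^ D) \<longlongrightarrow> (if D \<le> 2 * N then poly3_hom P N D d0 x0 y0 else 0)) at_top"
    unfolding scaled by (rule tendsto_sum_powers_div_power) (simp add: high)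
  then have "(if D \<le> 2 * N then poly3_hom P N D d0 x0 y0 else 0) = L"
    using limit by (rule tendsto_unique[OF trivial_limit_at_top_linorder])
  then have "poly3_hom P N D d0 x0 y0 \<noteq> 0"
    using \<open>L \<noteq> 0\<close> by (auto split: if_splits)
  have "\<exists>a b c. P a b c \<noteq> 0 \<and> a + b = D"
  proof (rule ccontr)
    assume "\<not> (\<exists>a b c. P a b c \<noteq> 0 \<and> a + b = D)"
    then have "P a b c = 0" if "a + b = D" for a b c
      using that by blast
    then have "poly3_hom P N D d0 x0 y0 = 0"
      unfolding poly3_hom_def by (simp cong: if_cong)
    with \<open>poly3_hom P N D d0 x0 y0 \<noteq> 0\<close> show False ..
  qed
  then obtain a b c where "P' a b c \<noteq> 0" "a + b = D"
    unfolding P'_def by auto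
  moreover have "\<forall>a b c. P' a b c \<noteq> 0 \<longrightarrow> a \<le> N \<and> b \<le> N \<and> c \<le> N"
    and "\<forall>a b c. P' a b c \<noteq> 0 \<longrightarrow> a + b \<le> D"
    using supp by (simp_all add: P'_def)
  ultimately show ?thesis
    unfolding poly_xyd_total_xy_degree_def using eval'[unfolded poly3_eval_def]
    by (intro exI[of _ P'] exI[of _ N]) blast
qed

section \<open>Balanced sign vectors\<close>

definition balanced_signs :: "nat \<Rightarrow> (nat \<Rightarrow> nat) set" where
  "balanced_signs k = {\<sigma> \<in> {..<k} \<rightarrow>\<^sub>E {0, 1}. (\<Sum>i<k. (-1::real) ^ \<sigma> i) = 0}"

lemma sum_signs_eq:
  assumes "\<sigma> \<in> {..<k} \<rightarrow>\<^sub>E {0, 1::nat}"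
  shows "(\<Sum>i<k. (-1::real) ^ \<sigma> i) = real k - 2 * real (card {i\<in>{..<k}. \<sigma> i = 1})"
proof -
  have "(\<Sum>i<k. (-1::real) ^ \<sigma> i) = (\<Sum>i<k. 1 - 2 * of_bool (\<sigma> i = 1))"
  proof (intro sum.cong refl)
    fix i assume "i \<in> {..<k}"
    then have "\<sigma> i = 0 \<or> \<sigma> i = 1"
      using assms by (auto simp: PiE_iff)
    then show "(-1::real) ^ \<sigma> i = 1 - 2 * of_bool (\<sigma> i = 1)"
      by auto
  qed
  also have "\<dots> = real k - 2 * real (card {i\<in>{..<k}. \<sigma> i = 1})"
    by (simp add: sum_subtractf flip: sum_distrib_left) (simp add: Int_def conj_commute)
  finally show ?thesis .
qed

lemma card_sign_vectors_with_ones: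
  "card {\<sigma> \<in> {..<k} \<rightarrow>\<^sub>E {0, 1::nat}. card {i\<in>{..<k}. \<sigma> i = 1} = m} = k choose m"
proof -
  let ?A = "{\<sigma> \<in> {..<k} \<rightarrow>\<^sub>E {0, 1::nat}. card {i\<in>{..<k}. \<sigma> i = 1} = m}"
  have "bij_betw (\<lambda>\<sigma>. {i\<in>{..<k}. \<sigma> i = 1}) ?A {S. S \<subseteq> {..<k} \<and> card S = m}"
  proof (rule bij_betw_byWitness[where f' = "\<lambda>S. \<lambda>i\<in>{..<k}. if i \<in> S then 1 else 0"])
    have "{i\<in>{..<k}. (\<lambda>i\<in>{..<k}. if i \<in> S then 1 else 0::nat) i = 1} = S" if "S \<subseteq> {..<k}" for S
      using that by auto
    then show "\<forall>S\<in>{S. S \<subseteq> {..<k} \<and> card S = m}. {i\<in>{..<k}. (\<lambda>i\<in>{..<k}. if i \<in> S then 1 else 0::nat) i = 1} = S"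
      and "(\<lambda>S. \<lambda>i\<in>{..<k}. if i \<in> S then 1 else 0::nat) ` {S. S \<subseteq> {..<k} \<and> card S = m} \<subseteq> ?A"
      by (auto simp: PiE_iff)
    show "\<forall>\<sigma>\<in>?A. (\<lambda>i\<in>{..<k}. if i \<in> {i\<in>{..<k}. \<sigma> i = 1} then 1 else 0) = \<sigma>"
      by (force simp: PiE_iff extensional_def)
  qed (auto simp: PiE_iff)
  then show ?thesis
    by (simp add: bij_betw_same_card n_subsets)
qed

lemma card_balanced_signs: "card (balanced_signs k) = (if odd k then 0 else k choose (k div 2))"
proof -
  have "(\<Sum>i<k. (-1::real) ^ \<sigma> i) = 0 \<longleftrightarrow> 2 * card {i\<in>{..<k}. \<sigma> i = 1} = k"
    if "\<sigma> \<in> {..<k} \<rightarrow>\<^sub>E {0, 1}" for \<sigma>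
    unfolding sum_signs_eq[OF that] by linarith
  then have "balanced_signs k = {\<sigma> \<in> {..<k} \<rightarrow>\<^sub>E {0, 1}. 2 * card {i\<in>{..<k}. \<sigma> i = 1} = k}"
    unfolding balanced_signs_def by (intro Collect_cong) auto
  also have "\<dots> = (if odd k then {} else {\<sigma> \<in> {..<k} \<rightarrow>\<^sub>E {0, 1}. card {i\<in>{..<k}. \<sigma> i = 1} = k div 2})"
  proof (cases "odd k")
    case True
    then have "2 * c \<noteq> k" for c :: nat
      by (metis dvd_triv_left)
    then show ?thesis
      using True by simp
  next
    case False
    then have "2 * c = k \<longleftrightarrow> c = k div 2" for c :: nat
      by presburger
    then show ?thesis
      using False by simp
  qed
  finally show ?thesis
    by (simp only: if_distrib[of card] card.empty card_sign_vectors_with_ones)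
qed

lemma balanced_signs_subset: "balanced_signs k \<subseteq> {..<k} \<rightarrow>\<^sub>E {0, 1}"
  by (auto simp: balanced_signs_def)

lemma finite_balanced_signs: "finite (balanced_signs k)"
  using balanced_signs_subset by (rule finite_subset) (simp add: finite_PiE)

lemma card_unbalanced_signs:
  "card (({..<k} \<rightarrow>\<^sub>E {0, 1::nat}) - balanced_signs k) = 2 ^ k - card (balanced_signs k)"
  using balanced_signs_subset finite_balanced_signs by (simp add: card_Diff_subset card_PiE numeral_2_eq_2)

lemma abs_signed_sum_le: "\<bar>\<Sum>i<k. (-1::real) ^ \<sigma> i * w i\<bar> \<le> (\<Sum>i<k. \<bar>w i\<bar>)"
  using sum_abs[of "\<lambda>i. (-1::real) ^ \<sigma> i * w i" "{..<k}"] by (simp add: abs_mult power_abs)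

lemma balanced_signed_sum_shift:
  "\<sigma> \<in> balanced_signs k \<Longrightarrow> (\<Sum>i<k. (-1::real) ^ \<sigma> i * (w i - c)) = (\<Sum>i<k. (-1) ^ \<sigma> i * w i)"
  by (simp add: balanced_signs_def right_diff_distrib sum_subtractf flip: sum_distrib_right)

lemma prod_signed_sums_split:
  "prod_signed_sums k r d = (\<Prod>\<sigma>\<in>balanced_signs k. d - (\<Sum>i<k. (-1) ^ \<sigma> i * r i))
     * (\<Prod>\<sigma>\<in>({..<k} \<rightarrow>\<^sub>E {0, 1}) - balanced_signs k. d - (\<Sum>i<k. (-1) ^ \<sigma> i * r i))"
  unfolding prod_signed_sums_def
  using balanced_signs_subset by (subst prod.subset_diff[of "balanced_signs k"]) (auto simp: finite_PiE)

section \<open>The product along rays\<close>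

lemma prod_signed_sums_growth:
  assumes near: "\<And>t i. 1 \<le> t \<Longrightarrow> \<bar>r t i - t * R\<bar> \<le> m i"
  shows "\<exists>C. \<forall>t\<ge>1. \<bar>prod_signed_sums k (r t) d\<bar> \<le> C * t ^ (2 ^ k - card (balanced_signs k))"
proof -
  let ?E = "{..<k} \<rightarrow>\<^sub>E {0, 1::nat}" and ?Z = "balanced_signs k"
  define K0 where "K0 = \<bar>d\<bar> + (\<Sum>i<k. m i)"
  define K1 where "K1 = \<bar>d\<bar> + (\<Sum>i<k. \<bar>R\<bar> + m i)"
  have m: "0 \<le> m i" for i
    using near[of 1 i] by linarith
  have K: "0 \<le> K0" "0 \<le> K1"
    unfolding K0_def K1_def using m by (simp_all add: sum_nonneg add_nonneg_nonneg)
  have balanced: "\<bar>d - (\<Sum>i<k. (-1) ^ \<sigma> i * r t i)\<bar> \<le> K0" if "1 \<le> t" "\<sigma> \<in> ?Z" for t \<sigma>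
  proof -
    have "(\<Sum>i<k. \<bar>r t i - t * R\<bar>) \<le> (\<Sum>i<k. m i)"
      using near[OF \<open>1 \<le> t\<close>] by (intro sum_mono)
    then have "\<bar>\<Sum>i<k. (-1) ^ \<sigma> i * (r t i - t * R)\<bar> \<le> (\<Sum>i<k. m i)"
      using abs_signed_sum_le[of \<sigma> "\<lambda>i. r t i - t * R" k] by linarith
    then show ?thesis
      unfolding K0_def balanced_signed_sum_shift[OF \<open>\<sigma> \<in> ?Z\<close>] by linarith
  qed
  have unbalanced: "\<bar>d - (\<Sum>i<k. (-1) ^ \<sigma> i * r t i)\<bar> \<le> t * K1" if "1 \<le> t" for t \<sigma>
  proof -
    have "\<bar>r t i\<bar> \<le> t * (\<bar>R\<bar> + m i)" for i
      using near[OF \<open>1 \<le> t\<close>, of i] m[of i] \<open>1 \<le> t\<close>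
      by (smt (verit, best) abs_mult distrib_left mult_le_cancel_right1 mult_nonneg_nonneg)
    then have "\<bar>\<Sum>i<k. (-1) ^ \<sigma> i * r t i\<bar> \<le> t * (\<Sum>i<k. \<bar>R\<bar> + m i)"
      using abs_signed_sum_le[of \<sigma> "r t" k] sum_mono[of "{..<k}" "\<lambda>i. \<bar>r t i\<bar>"]
      by (smt (verit) sum_distrib_left)
    moreover have "\<bar>d\<bar> \<le> t * \<bar>d\<bar>"
      using \<open>1 \<le> t\<close> by (simp add: mult_le_cancel_right1)
    ultimately show ?thesis
      unfolding K1_def by (simp add: distrib_left)
  qed
  have "\<bar>prod_signed_sums k (r t) d\<bar> \<le> (K0 ^ card ?Z * K1 ^ (2 ^ k - card ?Z)) * t ^ (2 ^ k - card ?Z)"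
    if "1 \<le> t" for t
  proof -
    have "\<bar>prod_signed_sums k (r t) d\<bar> \<le> (\<Prod>\<sigma>\<in>?Z. K0) * (\<Prod>\<sigma>\<in>?E - ?Z. t * K1)"
      unfolding prod_signed_sums_split abs_mult abs_prod
      using balanced[OF that] unbalanced[OF that] K \<open>1 \<le> t\<close>
      by (intro mult_mono prod_mono prod_nonneg) auto
    then show ?thesis
      unfolding prod_constant card_unbalanced_signs by (simp add: power_mult_distrib mult_ac)
  qed
  then show ?thesis
    by blast
qed

lemma abs_dist_scaled_le:
  assumes "0 \<le> t"
  shows "\<bar>sqrt ((t * \<xi> - u)^2 + (t * \<eta> - v)^2) - t * sqrt (\<xi>^2 + \<eta>^2)\<bar> \<le> sqrt (u^2 + v^2)"
proof -
  let ?p = "Complex (t * \<xi>) (t * \<eta>)" and ?q = "Complex u v"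
  have "cmod ?p = t * sqrt (\<xi>^2 + \<eta>^2)"
    using assms by (simp add: cmod_def power_mult_distrib real_sqrt_mult flip: distrib_left)
  moreover have "\<bar>cmod (?p - ?q) - cmod ?p\<bar> \<le> cmod ?q"
    using norm_triangle_ineq3[of "?p - ?q" ?p] by (simp add: norm_minus_commute)
  ultimately show ?thesis
    by (simp add: cmod_def)
qed

lemma kellipse_poly_growth:
  "\<exists>C. \<forall>t\<ge>1. \<bar>kellipse_poly k u v d (t * x) (t * y)\<bar> \<le> C * t ^ (2 ^ k - card (balanced_signs k))"
  unfolding kellipse_poly_eq_prod_signed_sums
  by (rule prod_signed_sums_growth) (rule abs_dist_scaled_le, simp)

lemma prod_signed_sums_limit:
  assumes lim: "\<And>i. ((\<lambda>t. r t i - t) \<longlongrightarrow> c i) at_top"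
  shows "\<exists>d L. L \<noteq> 0 \<and>
           ((\<lambda>t. prod_signed_sums k (r t) d / t ^ (2 ^ k - card (balanced_signs k))) \<longlongrightarrow> L) at_top"
proof -
  let ?E = "{..<k} \<rightarrow>\<^sub>E {0, 1::nat}" and ?Z = "balanced_signs k"
  define d where "d = 1 + (\<Sum>i<k. \<bar>c i\<bar>)"
  let ?F = "\<lambda>\<sigma> t. d - (\<Sum>i<k. (-1) ^ \<sigma> i * r t i)"
  let ?L = "(\<Prod>\<sigma>\<in>?Z. d - (\<Sum>i<k. (-1) ^ \<sigma> i * c i)) * (\<Prod>\<sigma>\<in>?E - ?Z. - (\<Sum>i<k. (-1) ^ \<sigma> i))"
  have "((\<lambda>t. ?F \<sigma> t) \<longlongrightarrow> d - (\<Sum>i<k. (-1) ^ \<sigma> i * c i)) at_top" if "\<sigma> \<in> ?Z" for \<sigma>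
  proof -
    have "((\<lambda>t. d - (\<Sum>i<k. (-1) ^ \<sigma> i * (r t i - t))) \<longlongrightarrow> d - (\<Sum>i<k. (-1) ^ \<sigma> i * c i)) at_top"
      by (intro tendsto_intros lim)
    then show ?thesis
      by (simp add: balanced_signed_sum_shift[OF that])
  qed
  moreover have "((\<lambda>t. ?F \<sigma> t / t) \<longlongrightarrow> - (\<Sum>i<k. (-1) ^ \<sigma> i)) at_top" for \<sigma>
  proof -
    have inv: "((\<lambda>t::real. 1 / t) \<longlongrightarrow> 0) at_top"
      by real_asymp
    have "((\<lambda>t. d * (1 / t) - (\<Sum>i<k. (-1) ^ \<sigma> i * ((r t i - t) * (1 / t) + 1))) \<longlongrightarrow>
            d * 0 - (\<Sum>i<k. (-1) ^ \<sigma> i * (c i * 0 + 1))) at_top"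
      by (intro tendsto_intros lim inv)
    moreover have "\<forall>\<^sub>F t in at_top. d * (1 / t) - (\<Sum>i<k. (-1) ^ \<sigma> i * ((r t i - t) * (1 / t) + 1)) = ?F \<sigma> t / t"
      using eventually_gt_at_top[of 0]
    proof eventually_elim
      case (elim t)
      then have "(r t i - t) * (1 / t) + 1 = r t i / t" for i
        by (simp add: field_simps)
      then show ?case
        by (simp add: diff_divide_distrib sum_divide_distrib)
    qed
    ultimately show ?thesis
      by (simp add: tendsto_cong)
  qed
  ultimately have lim: "((\<lambda>t. (\<Prod>\<sigma>\<in>?Z. ?F \<sigma> t) * (\<Prod>\<sigma>\<in>?E - ?Z. ?F \<sigma> t / t)) \<longlongrightarrow> ?L) at_top"
    by (intro tendsto_mult tendsto_prod) auto
  have eq: "\<forall>\<^sub>F t in at_top. (\<Prod>\<sigma>\<in>?Z. ?F \<sigma> t) * (\<Prod>\<sigma>\<in>?E - ?Z. ?F \<sigma> t / t)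
                   = prod_signed_sums k (r t) d / t ^ (2 ^ k - card ?Z)"
    unfolding prod_signed_sums_split card_unbalanced_signs[symmetric] by (simp add: prod_dividef)
  have "?L \<noteq> 0"
  proof -
    have "d - (\<Sum>i<k. (-1) ^ \<sigma> i * c i) \<noteq> 0" for \<sigma>
      using abs_signed_sum_le[of \<sigma> c k] unfolding d_def by linarith
    moreover have "(\<Sum>i<k. (-1::real) ^ \<sigma> i) \<noteq> 0" if "\<sigma> \<in> ?E - ?Z" for \<sigma>
      using that by (simp add: balanced_signs_def)
    ultimately show ?thesis
      by (simp add: balanced_signs_def finite_PiE)
  qed
  moreover from lim have "((\<lambda>t. prod_signed_sums k (r t) d / t ^ (2 ^ k - card ?Z)) \<longlongrightarrow> ?L) at_top"
    by (rule tendsto_cong[OF eq, THEN iffD1])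
  ultimately show ?thesis
    by blast
qed

lemma kellipse_poly_limit:
  "\<exists>d L. L \<noteq> 0 \<and> ((\<lambda>t. kellipse_poly k u v d t 0 / t ^ (2 ^ k - card (balanced_signs k))) \<longlongrightarrow> L) at_top"
proof -
  have "((\<lambda>t. sqrt ((t - u i)^2 + (0 - v i)^2) - t) \<longlongrightarrow> - u i) at_top" for i
    by real_asymp
  then show ?thesis
    unfolding kellipse_poly_eq_prod_signed_sums by (rule prod_signed_sums_limit)
qed

theorem theorem1:
  fixes k :: nat and u v :: "nat \<Rightarrow> real"
  assumes "k \<ge> 1"
  shows "poly_xyd_total_xy_degree (kellipse_poly k u v)
           (if odd k then 2 ^ k else 2 ^ k - (k choose (k div 2)))
       \<and> (\<exists>(A :: nat \<Rightarrow> nat \<Rightarrow> real) (B :: nat \<Rightarrow> nat \<Rightarrow> real)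
            (C0 :: nat \<Rightarrow> nat \<Rightarrow> real) (U :: nat \<Rightarrow> nat \<Rightarrow> nat \<Rightarrow> real)
            (V :: nat \<Rightarrow> nat \<Rightarrow> nat \<Rightarrow> real).
            (\<forall>i < 2 ^ k. \<forall>j < 2 ^ k.
               A i j = A j i \<and> B i j = B j i \<and> C0 i j = C0 j i \<and>
               (\<forall>l < k. U l i j = U l j i \<and> V l i j = V l j i) \<and>
               A i j \<in> \<int> \<and> B i j \<in> \<int>) \<and>
            (\<forall>(u' :: nat \<Rightarrow> real) (v' :: nat \<Rightarrow> real) d x y.
               kellipse_poly k u' v' d x y =
               det (mat (2 ^ k) (2 ^ k) (\<lambda>(i, j).
                  x * A i j + y * B i j +
                  (d * C0 i j + (\<Sum>l<k. u' l * U l i j + v' l * V l i j))))))"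
proof -
  obtain P N where supp: "\<forall>a b c. P a b c \<noteq> 0 \<longrightarrow> a \<le> N \<and> b \<le> N \<and> c \<le> N"
    and eval: "\<forall>d x y. kellipse_poly k u v d x y = poly3_eval P N d x y"
    using polyfun3_coeffs[OF polyfun3_kellipse_poly] by blast
  obtain d0 L where "L \<noteq> 0"
    and "((\<lambda>t. kellipse_poly k u v d0 t 0 / t ^ (2 ^ k - card (balanced_signs k))) \<longlongrightarrow> L) at_top"
    using kellipse_poly_limit by blast
  then have lim: "((\<lambda>t. kellipse_poly k u v d0 (t * 1) (t * 0) / t ^ (2 ^ k - card (balanced_signs k))) \<longlongrightarrow> L) at_top"
    by simp
  have deg: "poly_xyd_total_xy_degree (kellipse_poly k u v) (2 ^ k - card (balanced_signs k))"
    by (rule poly_xyd_total_xy_degreeI[OF supp eval kellipse_poly_growth lim \<open>L \<noteq> 0\<close>])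
  have "2 ^ k - card (balanced_signs k) = (if odd k then 2 ^ k else 2 ^ k - (k choose (k div 2)))"
    by (simp add: card_balanced_signs)
  with deg have "poly_xyd_total_xy_degree (kellipse_poly k u v) (if odd k then 2 ^ k else 2 ^ k - (k choose (k div 2)))"
    by simp
  then show ?thesis
    using kellipse_poly_det_pencil[of k] by (rule conjI)
qed

end
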